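(* Let $A$ be a 2-sided residuated $\vee$-semilattice, let $F$ be a filter of $A$ and let $a\in A$ with $a\notin F$. Then there exists a $\vee$-prime filter $G$ of $A$ such that $F\subseteq G$ and $a\notin G$.
   Context: A residuated poset is a partially ordered semigroup $(A;\cdot,\le)$ with binary operations $\to,\leadsto$ such that $x\cdot y\le z$ iff $x\le y\to z$ iff $y\le x\leadsto z$ for all $x,y,z$. It is 2-sided if $x\cdot y\le x$ and $x\cdot y\le y$ for all $x,y$. It is a residuated $\vee$-semilattice if $(A,\le)$ is a join-semilattice. A filter of $A$ is a nonempty subset that is upward closed and closed under $\cdot$. A filter $G$ is $\vee$-prime if $x\vee y\in G$ implies $x\in G$ or $y\in G$. *)

theory Defs
  imports Main
begin

text \<open>A residuated poset on the carrier type 'a (ordered by the type's order):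
  a partially ordered semigroup (associative, multiplication monotone in both arguments)
  with residuals r (written x \<rightarrow> z as r x z) and l (written x \<leadsto> z as l x z) such that
  x*y \<le> z iff x \<le> y \<rightarrow> z iff y \<le> x \<leadsto> z.\<close>

definition residuated_poset ::
  "('a::order \<Rightarrow> 'a \<Rightarrow> 'a) \<Rightarrow> ('a \<Rightarrow> 'a \<Rightarrow> 'a) \<Rightarrow> ('a \<Rightarrow> 'a \<Rightarrow> 'a) \<Rightarrow> bool" where
  "residuated_poset m r l \<longleftrightarrow>
     (\<forall>x y z. m (m x y) z = m x (m y z)) \<and>
     (\<forall>x y z. x \<le> y \<longrightarrow> m x z \<le> m y z \<and> m z x \<le> m z y) \<and>
     (\<forall>x y z. (m x y \<le> z \<longleftrightarrow> x \<le> r y z) \<and> (m x y \<le> z \<longleftrightarrow> y \<le> l x z))"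

definition two_sided :: "('a::order \<Rightarrow> 'a \<Rightarrow> 'a) \<Rightarrow> bool" where
  "two_sided m \<longleftrightarrow> (\<forall>x y. m x y \<le> x \<and> m x y \<le> y)"

definition res_filter :: "('a::order \<Rightarrow> 'a \<Rightarrow> 'a) \<Rightarrow> 'a set \<Rightarrow> bool" where
  "res_filter m F \<longleftrightarrow> F \<noteq> {} \<and> (\<forall>x\<in>F. \<forall>y. x \<le> y \<longrightarrow> y \<in> F) \<and> (\<forall>x\<in>F. \<forall>y\<in>F. m x y \<in> F)"

definition sup_prime :: "'a::semilattice_sup set \<Rightarrow> bool" where
  "sup_prime G \<longleftrightarrow> (\<forall>x y. sup x y \<in> G \<longrightarrow> x \<in> G \<or> y \<in> G)"

end

theory Submission
  imports Defs
begin

text \<open>By Zorn's lemma there is a filter \<open>G \<supseteq> F\<close> maximal among the filters avoiding \<open>a\<close>.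
  For \<open>x \<notin> G\<close> the filter generated by \<open>G \<union> {x}\<close>, which in the 2-sided case consists of the
  upper bounds of the powers \<open>(g x)\<^sup>n\<close> with \<open>g \<in> G\<close>, must therefore contain \<open>a\<close>.
  If \<open>x \<squnion> y \<in> G\<close> but \<open>x, y \<notin> G\<close>, this gives \<open>c \<in> G\<close> and \<open>n\<close> with \<open>(c x)\<^sup>n \<le> a\<close> and
  \<open>(c y)\<^sup>n \<le> a\<close>. Residuation makes multiplication distribute over \<open>\<squnion>\<close> up to \<open>\<le>\<close>, so
  \<open>(c (x \<squnion> y))\<^sup>2\<^sup>n \<le> (c x \<squnion> c y)\<^sup>2\<^sup>n \<le> (c x)\<^sup>n \<squnion> (c y)\<^sup>n \<le> a\<close>, and \<open>a \<in> G\<close> follows.\<close>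

lemma res_filterI:
  "F \<noteq> {} \<Longrightarrow> (\<And>x y. x \<in> F \<Longrightarrow> x \<le> y \<Longrightarrow> y \<in> F)
    \<Longrightarrow> (\<And>x y. x \<in> F \<Longrightarrow> y \<in> F \<Longrightarrow> m x y \<in> F) \<Longrightarrow> res_filter m F"
  unfolding res_filter_def by blast

lemma res_filter_nonempty: "res_filter m F \<Longrightarrow> F \<noteq> {}"
  unfolding res_filter_def by blast

lemma res_filter_upclosed: "res_filter m F \<Longrightarrow> x \<in> F \<Longrightarrow> x \<le> y \<Longrightarrow> y \<in> F"
  unfolding res_filter_def by blast

lemma res_filter_mult: "res_filter m F \<Longrightarrow> x \<in> F \<Longrightarrow> y \<in> F \<Longrightarrow> m x y \<in> F"
  unfolding res_filter_def by blast

lemma res_filter_Union_chain: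
  assumes "C \<noteq> {}" and "chain\<^sub>\<subseteq> C" and filters: "\<And>G. G \<in> C \<Longrightarrow> res_filter m G"
  shows "res_filter m (\<Union>C)"
proof (rule res_filterI)
  show "\<Union>C \<noteq> {}"
    using \<open>C \<noteq> {}\<close> filters res_filter_nonempty by blast
  show "y \<in> \<Union>C" if "x \<in> \<Union>C" and "x \<le> y" for x y
  proof -
    obtain G where "G \<in> C" "x \<in> G"
      using \<open>x \<in> \<Union>C\<close> by blast
    then show ?thesis
      using res_filter_upclosed[OF filters _ \<open>x \<le> y\<close>] by blast
  qed
  show "m x y \<in> \<Union>C" if "x \<in> \<Union>C" and "y \<in> \<Union>C" for x y
  proof -
    obtain G where "G \<in> C" "x \<in> G" "y \<in> G"
      using \<open>x \<in> \<Union>C\<close> \<open>y \<in> \<Union>C\<close> \<open>chain\<^sub>\<subseteq> C\<close>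
      unfolding chain_subset_def by blast
    then show ?thesis
      using res_filter_mult[OF filters] by blast
  qed
qed

lemma ex_maximal_res_filter_avoiding:
  assumes "res_filter m F" and "a \<notin> F"
  obtains G where "res_filter m G" and "F \<subseteq> G" and "a \<notin> G"
    and "\<And>H. res_filter m H \<Longrightarrow> G \<subseteq> H \<Longrightarrow> a \<notin> H \<Longrightarrow> H = G"
proof -
  let ?S = "{G. res_filter m G \<and> F \<subseteq> G \<and> a \<notin> G}"
  have chain_Union: "\<Union>C \<in> ?S" if "C \<noteq> {}" and "subset.chain ?S C" for C
  proof -
    have "C \<subseteq> ?S" and "chain\<^sub>\<subseteq> C"
      using \<open>subset.chain ?S C\<close> by (simp_all add: chain_subset_alt_def subset.chain_def)
    then have "res_filter m (\<Union>C)"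
      using res_filter_Union_chain[OF \<open>C \<noteq> {}\<close>] by blast
    moreover have "F \<subseteq> \<Union>C" and "a \<notin> \<Union>C"
      using \<open>C \<subseteq> ?S\<close> \<open>C \<noteq> {}\<close> by blast+
    ultimately show ?thesis
      by simp
  qed
  have "?S \<noteq> {}"
    using assms by blast
  then obtain G where G: "res_filter m G" "F \<subseteq> G" "a \<notin> G"
    and maximal: "\<forall>H\<in>?S. G \<subseteq> H \<longrightarrow> H = G"
    using subset_Zorn_nonempty[of ?S, OF _ chain_Union] by auto
  show thesis
  proof (rule that[OF G])
    show "H = G" if "res_filter m H" and "G \<subseteq> H" and "a \<notin> H" for H
      using maximal that \<open>F \<subseteq> G\<close> by blast
  qed
qed

text \<open>\<open>mult_pow m u n\<close> is \<open>u\<^sup>n\<^sup>+\<^sup>1\<close>: there is no unit to serve as \<open>u\<^sup>0\<close>.\<close>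

primrec mult_pow :: "('a \<Rightarrow> 'a \<Rightarrow> 'a) \<Rightarrow> 'a \<Rightarrow> nat \<Rightarrow> 'a" where
  "mult_pow m u 0 = u"
| "mult_pow m u (Suc n) = m u (mult_pow m u n)"

lemma res_filter_mult_pow: "res_filter m G \<Longrightarrow> u \<in> G \<Longrightarrow> mult_pow m u n \<in> G"
  by (induction n) (simp_all add: res_filter_mult)

locale two_sided_po_semigroup =
  fixes m :: "'a::order \<Rightarrow> 'a \<Rightarrow> 'a"
  assumes mult_assoc: "m (m x y) z = m x (m y z)"
    and mult_mono: "x \<le> x' \<Longrightarrow> y \<le> y' \<Longrightarrow> m x y \<le> m x' y'"
    and mult_le_left: "m x y \<le> x"
    and mult_le_right: "m x y \<le> y"
begin

lemma mult_pow_antimono: "n \<le> k \<Longrightarrow> mult_pow m u k \<le> mult_pow m u n"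
proof (induction k rule: dec_induct)
  case (step k)
  then show ?case
    using mult_le_right[of u "mult_pow m u k"] by simp
qed simp

lemma mult_pow_mono: "u \<le> v \<Longrightarrow> mult_pow m u n \<le> mult_pow m v n"
  by (induction n) (simp_all add: mult_mono)

lemma mult_mult_pow: "m (mult_pow m u n) (mult_pow m u k) = mult_pow m u (Suc (n + k))"
  by (induction n) (simp_all add: mult_assoc)

definition filter_extend :: "'a set \<Rightarrow> 'a \<Rightarrow> 'a set" where
  "filter_extend G x = {z. \<exists>g\<in>G. \<exists>n. mult_pow m (m g x) n \<le> z}"

lemma subset_filter_extend: "G \<subseteq> filter_extend G x"
proof
  fix g assume "g \<in> G"
  moreover have "mult_pow m (m g x) 0 \<le> g"
    by (simp add: mult_le_left)
  ultimately show "g \<in> filter_extend G x"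
    unfolding filter_extend_def by blast
qed

lemma mem_filter_extend:
  assumes "res_filter m G"
  shows "x \<in> filter_extend G x"
proof -
  obtain g where "g \<in> G"
    using res_filter_nonempty[OF assms] by blast
  moreover have "mult_pow m (m g x) 0 \<le> x"
    by (simp add: mult_le_right)
  ultimately show ?thesis
    unfolding filter_extend_def by blast
qed

lemma res_filter_filter_extend:
  assumes G: "res_filter m G"
  shows "res_filter m (filter_extend G x)"
proof (rule res_filterI)
  show "filter_extend G x \<noteq> {}"
    using mem_filter_extend[OF G] by blast
  show "y \<in> filter_extend G x" if "z \<in> filter_extend G x" and "z \<le> y" for z y
    using that unfolding filter_extend_def by (blast intro: order_trans)
  show "m z1 z2 \<in> filter_extend G x"
    if z1: "z1 \<in> filter_extend G x" and z2: "z2 \<in> filter_extend G x" for z1 z2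
  proof -
    obtain g1 n1 g2 n2 where g: "g1 \<in> G" "g2 \<in> G"
      and z: "mult_pow m (m g1 x) n1 \<le> z1" "mult_pow m (m g2 x) n2 \<le> z2"
      using z1 z2 unfolding filter_extend_def by blast
    let ?h = "m (m g1 g2) x"
    have "?h \<le> m g1 x" "?h \<le> m g2 x"
      by (simp_all add: mult_mono mult_le_left mult_le_right)
    then have "mult_pow m ?h n1 \<le> z1" "mult_pow m ?h n2 \<le> z2"
      using z by (meson mult_pow_mono order_trans)+
    then have "mult_pow m ?h (Suc (n1 + n2)) \<le> m z1 z2"
      unfolding mult_mult_pow[symmetric] by (rule mult_mono)
    moreover have "m g1 g2 \<in> G"
      using G g by (rule res_filter_mult)
    ultimately show ?thesis
      unfolding filter_extend_def by blast
  qed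
qed

end

locale two_sided_residuated_semilattice = two_sided_po_semigroup m
  for m :: "'a::semilattice_sup \<Rightarrow> 'a \<Rightarrow> 'a" +
  fixes r l :: "'a \<Rightarrow> 'a \<Rightarrow> 'a"
  assumes residuated: "residuated_poset m r l"
begin

lemma mult_le_iff_le_left_residual: "m x y \<le> z \<longleftrightarrow> y \<le> l x z"
  using residuated unfolding residuated_poset_def by blast

lemma mult_le_iff_le_right_residual: "m x y \<le> z \<longleftrightarrow> x \<le> r y z"
  using residuated unfolding residuated_poset_def by blast

lemma mult_sup_right_le: "m x (sup y z) \<le> sup (m x y) (m x z)"
proof -
  have "y \<le> l x (sup (m x y) (m x z))" "z \<le> l x (sup (m x y) (m x z))"
    by (simp_all flip: mult_le_iff_le_left_residual)
  then show ?thesis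
    by (simp add: mult_le_iff_le_left_residual)
qed

lemma mult_sup_left_le: "m (sup x y) z \<le> sup (m x z) (m y z)"
proof -
  have "x \<le> r z (sup (m x z) (m y z))" "y \<le> r z (sup (m x z) (m y z))"
    by (simp_all flip: mult_le_iff_le_right_residual)
  then show ?thesis
    by (simp add: mult_le_iff_le_right_residual)
qed

lemma mult_le_sup_mult_pow_Suc:
  assumes "p \<le> sup (mult_pow m u i) q"
  shows "m u p \<le> sup (mult_pow m u (Suc i)) q"
proof -
  have "m u p \<le> m u (sup (mult_pow m u i) q)"
    using assms by (simp add: mult_mono)
  also have "\<dots> \<le> sup (m u (mult_pow m u i)) (m u q)"
    by (rule mult_sup_right_le)
  also have "\<dots> \<le> sup (mult_pow m u (Suc i)) q"
    by (simp add: le_supI2 mult_le_right)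
  finally show ?thesis .
qed

text \<open>Expanding \<open>(u \<squnion> v)\<^sup>i\<^sup>+\<^sup>j\<^sup>+\<^sup>1\<close>, every word has at least \<open>i + 1\<close> factors \<open>u\<close> or at least
  \<open>j + 1\<close> factors \<open>v\<close>, and 2-sidedness drops all other factors.\<close>

lemma mult_pow_sup_le: "mult_pow m (sup u v) (i + j) \<le> sup (mult_pow m u i) (mult_pow m v j)"
proof (induction "i + j" arbitrary: i j)
  case 0
  then show ?case by simp
next
  case (Suc n)
  let ?p = "mult_pow m (sup u v) n"
  have "m u ?p \<le> sup (mult_pow m u i) (mult_pow m v j)"
  proof (cases i)
    case 0
    then show ?thesis by (simp add: le_supI1 mult_le_left)
  next
    case (Suc i')
    then have "?p \<le> sup (mult_pow m u i') (mult_pow m v j)"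
      using Suc.hyps by simp
    then show ?thesis
      unfolding \<open>i = Suc i'\<close> by (rule mult_le_sup_mult_pow_Suc)
  qed
  moreover have "m v ?p \<le> sup (mult_pow m u i) (mult_pow m v j)"
  proof (cases j)
    case 0
    then show ?thesis by (simp add: le_supI2 mult_le_left)
  next
    case (Suc j')
    then have "?p \<le> sup (mult_pow m v j') (mult_pow m u i)"
      using Suc.hyps by (simp add: sup_commute)
    then show ?thesis
      unfolding \<open>j = Suc j'\<close> sup_commute[of "mult_pow m u i"] by (rule mult_le_sup_mult_pow_Suc)
  qed
  ultimately have "sup (m u ?p) (m v ?p) \<le> sup (mult_pow m u i) (mult_pow m v j)"
    by simp
  with mult_sup_left_le have "m (sup u v) ?p \<le> sup (mult_pow m u i) (mult_pow m v j)"
    by (rule order_trans)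
  then show ?case
    by (simp flip: Suc.hyps(2))
qed

lemma filter_extend_sup:
  assumes G: "res_filter m G" and "sup x y \<in> G"
    and "a \<in> filter_extend G x" and "a \<in> filter_extend G y"
  shows "a \<in> G"
proof -
  obtain g1 n1 g2 n2 where g: "g1 \<in> G" "g2 \<in> G"
    and a: "mult_pow m (m g1 x) n1 \<le> a" "mult_pow m (m g2 y) n2 \<le> a"
    using assms(3,4) unfolding filter_extend_def by blast
  let ?c = "m g1 g2" and ?n = "n1 + n2"
  have "mult_pow m (m ?c x) ?n \<le> mult_pow m (m ?c x) n1"
    by (simp add: mult_pow_antimono)
  also have "\<dots> \<le> mult_pow m (m g1 x) n1"
    by (simp add: mult_pow_mono mult_mono mult_le_left)
  finally have ax: "mult_pow m (m ?c x) ?n \<le> a"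
    using a(1) by (rule order_trans)
  have "mult_pow m (m ?c y) ?n \<le> mult_pow m (m ?c y) n2"
    by (simp add: mult_pow_antimono)
  also have "\<dots> \<le> mult_pow m (m g2 y) n2"
    by (simp add: mult_pow_mono mult_mono mult_le_right)
  finally have ay: "mult_pow m (m ?c y) ?n \<le> a"
    using a(2) by (rule order_trans)
  have "mult_pow m (m ?c (sup x y)) (?n + ?n) \<le> mult_pow m (sup (m ?c x) (m ?c y)) (?n + ?n)"
    by (simp add: mult_pow_mono mult_sup_right_le)
  also have "\<dots> \<le> sup (mult_pow m (m ?c x) ?n) (mult_pow m (m ?c y) ?n)"
    by (rule mult_pow_sup_le)
  also have "\<dots> \<le> a"
    using ax ay by simp
  finally have "mult_pow m (m ?c (sup x y)) (?n + ?n) \<le> a" .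
  moreover have "mult_pow m (m ?c (sup x y)) (?n + ?n) \<in> G"
    using G g \<open>sup x y \<in> G\<close> by (simp add: res_filter_mult res_filter_mult_pow)
  ultimately show ?thesis
    using G res_filter_upclosed by blast
qed

lemma maximal_res_filter_sup_prime:
  assumes G: "res_filter m G" and "a \<notin> G"
    and maximal: "\<And>H. res_filter m H \<Longrightarrow> G \<subseteq> H \<Longrightarrow> a \<notin> H \<Longrightarrow> H = G"
  shows "sup_prime G"
proof -
  have "a \<in> filter_extend G x" if "x \<notin> G" for x
    using maximal[OF res_filter_filter_extend[OF G] subset_filter_extend] mem_filter_extend[OF G] that
    by blast
  then show ?thesis
    unfolding sup_prime_def using filter_extend_sup[OF G] \<open>a \<notin> G\<close> by blast
qed

end

lemma two_sided_residuated_semilatticeI: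
  fixes m r l :: "'a::semilattice_sup \<Rightarrow> 'a \<Rightarrow> 'a"
  assumes residuated: "residuated_poset m r l" and "two_sided m"
  shows "two_sided_residuated_semilattice m r l"
proof
  have mono: "x \<le> x' \<Longrightarrow> m x y \<le> m x' y" "y \<le> y' \<Longrightarrow> m x y \<le> m x y'" for x x' y y'
    using residuated unfolding residuated_poset_def by blast+
  show "x \<le> x' \<Longrightarrow> y \<le> y' \<Longrightarrow> m x y \<le> m x' y'" for x x' y y'
    using mono order_trans by blast
  show "m (m x y) z = m x (m y z)" for x y z
    using residuated unfolding residuated_poset_def by blast
  show "m x y \<le> x" "m x y \<le> y" for x y
    using \<open>two_sided m\<close> unfolding two_sided_def by blast+
qed (fact residuated)

theorem theorem5p5:
  fixes m r l :: "'a::semilattice_sup \<Rightarrow> 'a \<Rightarrow> 'a" and F :: "'a set" and a :: 'a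
  assumes "residuated_poset m r l" and "two_sided m"
    and "res_filter m F" and "a \<notin> F"
  shows "\<exists>G. res_filter m G \<and> sup_prime G \<and> F \<subseteq> G \<and> a \<notin> G"
proof -
  interpret two_sided_residuated_semilattice m r l
    using assms(1,2) by (rule two_sided_residuated_semilatticeI)
  obtain G where "res_filter m G" "F \<subseteq> G" "a \<notin> G"
    and "\<And>H. res_filter m H \<Longrightarrow> G \<subseteq> H \<Longrightarrow> a \<notin> H \<Longrightarrow> H = G"
    using ex_maximal_res_filter_avoiding[OF assms(3,4)] by blast
  then show ?thesis
    using maximal_res_filter_sup_prime by blast
qed

end
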